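(* Let $n,p$ be positive integers such that $p$ is odd and $n$ and $n+p$ are relatively prime. Let $\gamma_{n,p}(t)=(\sin(nt),\sin((n+p)t))$ and $t_k=\frac{2\pi k}{4n(n+p)}$ for $k\in\mathbb{Z}$. Then the operator \[ \operatorname{E}_\gamma:\Pi^L_{n,p}\to\Pi^{\mathrm{trig},L}_{2n(n+p)},\qquad \operatorname{E}_\gamma P(t)=P(\gamma_{n,p}(t)),\ t\in[0,2\pi], \] is an isometric isomorphism from $\Pi^L_{n,p}$ equipped with the inner product $\langle f,g\rangle=\frac{1}{\pi^2}\int_{-1}^1\int_{-1}^1 f(x,y)\overline{g(x,y)}\frac{1}{\sqrt{1-x^2}\sqrt{1-y^2}}\,dx\,dy$ onto $\Pi^{\mathrm{trig},L}_{2n(n+p)}$ equipped with the inner product $\langle q_1,q_2\rangle=\frac{1}{2\pi}\int_0^{2\pi}q_1(t)\overline{q_2(t)}\,dt$.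
   Context: $T_i(x)=\cos(i\arccos x)$ is the Chebyshev polynomial of the first kind. The index set is $\Gamma^L_{n,p}=\{(i,j)\in\mathbb{N}_0^2: i+j\le 2n\}\cup\bigcup_{m=1}^{2p-1}\{(i,j)\in\mathbb{N}_0^2: i+j=2n+m,\ j<\frac{n(2p-m)}{p}\}$, and $\Pi^L_{n,p}=\operatorname{span}\{T_i(x)T_j(y):(i,j)\in\Gamma^L_{n,p}\}$ (real coefficients). Let $\Pi^{\mathrm{trig}}_{2n(n+p)}$ be the space of functions $q(t)=\sum_{m=0}^{2n(n+p)}a_m\cos(mt)+\sum_{m=1}^{2n(n+p)-1}b_m\sin(mt)$ with $a_m,b_m\in\mathbb{R}$, and let $\Pi^{\mathrm{trig},L}_{2n(n+p)}=\{q\in\Pi^{\mathrm{trig}}_{2n(n+p)}: q(t_k)=q(t_{k'})\text{ for all }k,k'\in\mathbb{Z}\text{ with }\gamma_{n,p}(t_k)=\gamma_{n,p}(t_{k'})\}$. *)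

theory Defs
  imports "HOL-Analysis.Analysis"
begin

definition cheb_T :: "nat \<Rightarrow> real \<Rightarrow> real" where
  "cheb_T i x = cos (real i * arccos x)"

definition GammaL :: "nat \<Rightarrow> nat \<Rightarrow> (nat \<times> nat) set" where
  "GammaL n p = {(i, j). i + j \<le> 2 * n} \<union>
     (\<Union>m\<in>{1..2*p-1}. {(i, j). i + j = 2 * n + m \<and>
          real j < real n * (2 * real p - real m) / real p})"

definition PiL :: "nat \<Rightarrow> nat \<Rightarrow> (real \<times> real \<Rightarrow> real) set" where
  "PiL n p = {P. \<exists>c :: nat \<times> nat \<Rightarrow> real.
      P = (\<lambda>(x, y). \<Sum>(i, j)\<in>GammaL n p. c (i, j) * cheb_T i x * cheb_T j y)}"

definition PiTrig :: "nat \<Rightarrow> (real \<Rightarrow> real) set" where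
  "PiTrig N = {q. \<exists>a b :: nat \<Rightarrow> real.
      q = (\<lambda>t. (\<Sum>m=0..N. a m * cos (real m * t)) + (\<Sum>m=1..N-1. b m * sin (real m * t)))}"

definition lissajous :: "nat \<Rightarrow> nat \<Rightarrow> real \<Rightarrow> real \<times> real" where
  "lissajous n p t = (sin (real n * t), sin (real (n + p) * t))"

definition tpt :: "nat \<Rightarrow> nat \<Rightarrow> int \<Rightarrow> real" where
  "tpt n p k = 2 * pi * real_of_int k / (4 * real n * real (n + p))"

definition PiTrigL :: "nat \<Rightarrow> nat \<Rightarrow> (real \<Rightarrow> real) set" where
  "PiTrigL n p = {q \<in> PiTrig (2 * n * (n + p)).
      \<forall>k k' :: int. lissajous n p (tpt n p k) = lissajous n p (tpt n p k') \<longrightarrow>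
         q (tpt n p k) = q (tpt n p k')}"

definition Egamma :: "nat \<Rightarrow> nat \<Rightarrow> (real \<times> real \<Rightarrow> real) \<Rightarrow> (real \<Rightarrow> real)" where
  "Egamma n p P = (\<lambda>t. P (lissajous n p t))"

text \<open>Inner products (all functions are real valued, so conjugation is the identity).\<close>
definition cheb_inner :: "(real \<times> real \<Rightarrow> real) \<Rightarrow> (real \<times> real \<Rightarrow> real) \<Rightarrow> real" where
  "cheb_inner f g = 1 / pi\<^sup>2 *
     (LBINT x=-1..1. (LBINT y=-1..1.
        f (x, y) * g (x, y) * (1 / (sqrt (1 - x\<^sup>2) * sqrt (1 - y\<^sup>2)))))"

definition trig_inner :: "(real \<Rightarrow> real) \<Rightarrow> (real \<Rightarrow> real) \<Rightarrow> real" where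
  "trig_inner q1 q2 = 1 / (2 * pi) * (LBINT t=0..2*pi. q1 t * q2 t)"

end

theory Submission
  imports Defs "HOL-Library.Function_Algebras"
begin

(* Under x = sin (n t), y = sin ((n + p) t) the product T_i(x) T_j(y) becomes
   cos (i (pi/2 - n t)) cos (j (pi/2 - (n + p) t)), a trigonometric polynomial whose frequencies
   i n +- j (n + p) are bounded by 2n(n + p) on Gamma^L. Products of two such functions split into
   cosines of frequencies A n + B (n + p); by coprimality a vanishing frequency with (A, B) <> 0 forces
   A = (n + p) k, B = -n k, and the shape of Gamma^L forces k to be odd, so that the constant term
   cos ((A + B) pi/2) vanishes because p is odd. Hence the images are orthogonal with the same norms as
   the Chebyshev products: E is an isometry, in particular injective.
   For surjectivity, a trigonometric polynomial of degree N = 2n(n + p) is determined by its values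
   at the 2N points t_k. For q in the target these values only depend on the point gamma(t_k), and
   the curve meets at most |Gamma^L| distinct such points: they lie on the grid of points
   (cos (i pi/(2(n + p))), cos (j pi/(2n))) with i + j odd, which a lattice point count under the line
   n i + (n + p) j = 2n(n + p) compares with Gamma^L. So the target has dimension at most |Gamma^L|. *)

lemma below_line_if_mem_GammaL:
  assumes "p > 0" and "(i, j) \<in> GammaL n p"
  shows "n * i + (n + p) * j < 2 * n * (n + p) \<or> (i, j) = (0, 2 * n)"
proof -
  consider "i + j \<le> 2 * n"
    | m where "m \<in> {1..2*p-1}" "i + j = 2 * n + m" "real j < real n * (2 * real p - real m) / real p"
    using assms(2) unfolding GammaL_def by auto
  then show ?thesis
  proof cases
    case 1
    show ?thesis
    proof (cases "j = 2 * n")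
      case False
      then have "p * j < p * (2 * n)" using 1 \<open>p > 0\<close> by simp
      moreover have "n * i + (n + p) * j = n * (i + j) + p * j" by algebra
      moreover have "n * (i + j) \<le> n * (2 * n)" using 1 by simp
      ultimately have "n * i + (n + p) * j < n * (2 * n) + p * (2 * n)" by linarith
      then show ?thesis by (simp add: algebra_simps)
    qed (use 1 in auto)
  next
    case (2 m)
    have "real p * real j < real n * (2 * real p - real m)"
      using 2(3) \<open>p > 0\<close> by (simp add: field_simps)
    moreover have "real n * (real i + real j) = real n * (2 * real n + real m)"
      using arg_cong[OF 2(2), of real] by simp
    ultimately have "real (n * i + (n + p) * j) < real (2 * n * (n + p))"
      by (simp add: algebra_simps)
    then show ?thesis by (simp only: of_nat_less_iff simp_thms)
  qed
qed

lemma mem_GammaL_if_below_line: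
  assumes "n > 0" and "p > 0" and H: "n * i + (n + p) * j < 2 * n * (n + p) \<or> (i, j) = (0, 2 * n)"
  shows "(i, j) \<in> GammaL n p"
proof (cases "i + j \<le> 2 * n")
  case True
  then show ?thesis unfolding GammaL_def by auto
next
  case False
  define m where "m = i + j - 2 * n"
  have m: "m \<ge> 1" "i + j = 2 * n + m" using False by (auto simp: m_def)
  have "n * (i + j) + p * j < 2 * n * (n + p)"
    using H False by (auto simp: algebra_simps)
  then have B: "n * m + p * j < n * (2 * p)"
    unfolding m(2) by (simp add: algebra_simps)
  then have "m < 2 * p" using \<open>n > 0\<close> by (metis le_add1 le_less_trans mult_less_cancel1)
  have "real (n * m + p * j) < real (n * (2 * p))" using B by linarith
  then have "real p * real j < real n * (2 * real p - real m)" by (simp add: algebra_simps)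
  then have "real j < real n * (2 * real p - real m) / real p"
    using \<open>p > 0\<close> by (simp add: field_simps)
  then show ?thesis unfolding GammaL_def using m \<open>m < 2 * p\<close> by auto
qed

lemma mem_GammaL_iff:
  assumes "n > 0" and "p > 0"
  shows "(i, j) \<in> GammaL n p \<longleftrightarrow> n * i + (n + p) * j < 2 * n * (n + p) \<or> (i, j) = (0, 2 * n)"
  using below_line_if_mem_GammaL[OF assms(2)] mem_GammaL_if_below_line[OF assms] by blast

lemma GammaL_weighted_degree:
  assumes "n > 0" and "p > 0" and "(i, j) \<in> GammaL n p"
  shows "n * i + (n + p) * j \<le> 2 * n * (n + p)"
    and "n * i + (n + p) * j = 2 * n * (n + p) \<Longrightarrow> i = 0 \<and> j = 2 * n"
  using mem_GammaL_iff[OF assms(1,2), of i j] assms(3) by (auto simp: algebra_simps)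

lemma finite_GammaL: "finite (GammaL n p)"
proof (rule finite_subset)
  show "GammaL n p \<subseteq> {..2*n+2*p} \<times> {..2*n+2*p}"
    unfolding GammaL_def by auto
qed auto

section \<open>Chebyshev polynomials\<close>

lemma cos_mult_eq_if_cos_eq:
  assumes "cos s = cos t"
  shows "cos (real i * s) = cos (real i * t)"
proof -
  have rec: "cos (real (Suc (Suc k)) * x) = 2 * cos x * cos (real (Suc k) * x) - cos (real k * x)" for k x
  proof -
    have a: "real (Suc (Suc k)) * x = real (Suc k) * x + x" and b: "real k * x = real (Suc k) * x - x"
      by (simp_all add: algebra_simps)
    show ?thesis unfolding a b cos_add cos_diff by (simp add: algebra_simps)
  qed
  have "cos (real k * s) = cos (real k * t) \<and> cos (real (Suc k) * s) = cos (real (Suc k) * t)" for k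
    by (induction k) (use assms in \<open>simp_all only: rec\<close>, simp)
  then show ?thesis by blast
qed

lemma cheb_T_cos: "cheb_T i (cos t) = cos (real i * t)"
  unfolding cheb_T_def by (rule cos_mult_eq_if_cos_eq) simp

lemma cheb_T_sin: "cheb_T i (sin t) = cos (real i * (pi / 2 - t))"
  by (simp add: sin_cos_eq cheb_T_cos)

lemma interval_integral_arccos_substitution:
  fixes G g :: "real \<Rightarrow> real"
  assumes G: "\<And>\<theta>. (G has_real_derivative g \<theta>) (at \<theta>)"
    and g_cont: "continuous_on UNIV g" and g_nonneg: "\<And>\<theta>. g \<theta> \<ge> 0"
  shows "interval_lebesgue_integrable lborel (-1) 1 (\<lambda>x. g (arccos x) * (1 / sqrt (1 - x\<^sup>2)))"
    and "(LBINT x=-1..1. g (arccos x) * (1 / sqrt (1 - x\<^sup>2))) = G pi - G 0"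
proof -
  let ?F = "\<lambda>x. - G (arccos x)"
  have m1: "(-1::ereal) = ereal (-1)" by (simp add: one_ereal_def)
  have inside: "-1 < x" "x < 1" "x\<^sup>2 < 1" if "-1 < ereal x" "ereal x < 1" for x
    using that by (simp_all add: m1 abs_square_less_1)
  have F': "DERIV ?F x :> g (arccos x) * (1 / sqrt (1 - x\<^sup>2))" if "-1 < ereal x" "ereal x < 1" for x
    using DERIV_minus[OF DERIV_chain2[OF G DERIV_arccos[OF inside(1,2)[OF that]]]]
    by (simp add: divide_inverse)
  have G_cont: "isCont G y" for y using G DERIV_isCont by blast
  have integrand_cont: "isCont (\<lambda>x. g (arccos x) * (1 / sqrt (1 - x\<^sup>2))) x"
    if "-1 < ereal x" "ereal x < 1" for x
    using inside[OF that] g_cont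
    by (intro continuous_intros isCont_o2[OF isCont_arccos]) (auto simp: continuous_on_eq_continuous_at)
  have nonneg: "AE x in lborel. -1 < ereal x \<longrightarrow> ereal x < 1 \<longrightarrow> 0 \<le> g (arccos x) * (1 / sqrt (1 - x\<^sup>2))"
  proof (intro AE_I2 impI mult_nonneg_nonneg g_nonneg)
    fix x assume "-1 < ereal x" "ereal x < 1"
    then have "x\<^sup>2 < 1" by (rule inside(3))
    then show "0 \<le> 1 / sqrt (1 - x\<^sup>2)" by simp
  qed
  have F_cont: "continuous_on {-1..1} ?F"
    by (intro continuous_intros continuous_on_compose2[OF continuous_at_imp_continuous_on[of UNIV G]
          continuous_on_arccos']) (auto simp: G_cont)
  have lim_left: "((?F \<circ> real_of_ereal) \<longlongrightarrow> ?F (-1)) (at_right (-1))"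
    unfolding m1 ereal_tendsto_simps1 by (rule continuous_on_Icc_at_rightD[OF F_cont]) simp
  have lim_right: "((?F \<circ> real_of_ereal) \<longlongrightarrow> ?F 1) (at_left 1)"
    unfolding one_ereal_def ereal_tendsto_simps1 by (rule continuous_on_Icc_at_leftD[OF F_cont]) simp
  have "(-1::ereal) < 1" by (simp add: one_ereal_def)
  note FTC = interval_integral_FTC_nonneg[OF this F' integrand_cont nonneg lim_left lim_right]
  show "interval_lebesgue_integrable lborel (-1) 1 (\<lambda>x. g (arccos x) * (1 / sqrt (1 - x\<^sup>2)))"
    using FTC(1) by (simp add: interval_lebesgue_integrable_def one_ereal_def)
  show "(LBINT x=-1..1. g (arccos x) * (1 / sqrt (1 - x\<^sup>2))) = G pi - G 0"
    using FTC(2) by simp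
qed

definition cos_antideriv :: "int \<Rightarrow> real \<Rightarrow> real" where
  "cos_antideriv k \<theta> = (if k = 0 then \<theta> else sin (real_of_int k * \<theta>) / real_of_int k)"

lemma cos_antideriv_has_derivative:
  "(cos_antideriv k has_real_derivative cos (real_of_int k * \<theta>)) (at \<theta>)"
  unfolding cos_antideriv_def[abs_def]
  by (cases "k = 0") (auto intro!: derivative_eq_intros)

lemma cos_antideriv_0_pi:
  "cos_antideriv k 0 = 0" "cos_antideriv k pi = (if k = 0 then pi else 0)"
  unfolding cos_antideriv_def using sin_npi_int[of k] by (simp_all add: mult.commute)

lemma cos_times_cos_int:
  "cos (real i * x) * cos (real i' * x) =
     (cos (real_of_int (int i - int i') * x) + cos (real_of_int (int i + int i') * x)) / 2"
proof -
  have "real i * x - real i' * x = real_of_int (int i - int i') * x"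
       "real i * x + real i' * x = real_of_int (int i + int i') * x"
    by (simp_all add: algebra_simps)
  then show ?thesis unfolding cos_times_cos by simp
qed

text \<open>The Gram matrix of the Chebyshev polynomials, divided by \<open>\<pi>/2\<close>.\<close>
definition cheb_gram :: "nat \<Rightarrow> nat \<Rightarrow> real" where
  "cheb_gram i i' = (if i = i' then 1 else 0) + (if i = 0 \<and> i' = 0 then 1 else 0)"

lemma cheb_T_orthogonality:
  shows "interval_lebesgue_integrable lborel (-1) 1 (\<lambda>x. cheb_T i x * cheb_T i' x * (1 / sqrt (1 - x\<^sup>2)))"
    and "(LBINT x=-1..1. cheb_T i x * cheb_T i' x * (1 / sqrt (1 - x\<^sup>2))) = pi / 2 * cheb_gram i i'"
proof -
  define G where "G \<theta> = (cos_antideriv (int i - int i') \<theta> + cos_antideriv (int i + int i') \<theta>) / 2 + \<theta>"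
    for \<theta>
  \<comment> \<open>The substitution lemma needs a nonnegative integrand, hence the shift by 1.\<close>
  have G': "(G has_real_derivative cos (real i * \<theta>) * cos (real i' * \<theta>) + 1) (at \<theta>)" for \<theta>
    unfolding G_def[abs_def] cos_times_cos_int
    by (auto intro!: derivative_eq_intros cos_antideriv_has_derivative)
  have shift_nonneg: "cos (real i * \<theta>) * cos (real i' * \<theta>) + 1 \<ge> 0" for \<theta>
    using abs_le_D2[of "cos (real i * \<theta>) * cos (real i' * \<theta>)" 1] by (simp add: abs_mult mult_le_one)
  have "continuous_on UNIV (\<lambda>\<theta>. cos (real i * \<theta>) * cos (real i' * \<theta>) + 1)"
    by (intro continuous_intros)
  note shifted = interval_integral_arccos_substitution
    [where g="\<lambda>\<theta>. cos (real i * \<theta>) * cos (real i' * \<theta>) + 1", OF G' this shift_nonneg]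
  have "((\<lambda>\<theta>. \<theta>) has_real_derivative 1) (at \<theta>)" "continuous_on UNIV (\<lambda>_. 1::real)" "0 \<le> (1::real)"
    for \<theta> by simp_all
  note weight = interval_integral_arccos_substitution[where g="\<lambda>_. 1", OF this]
  have split: "cheb_T i x * cheb_T i' x * (1 / sqrt (1 - x\<^sup>2)) =
      (cos (real i * arccos x) * cos (real i' * arccos x) + 1) * (1 / sqrt (1 - x\<^sup>2)) - 1 * (1 / sqrt (1 - x\<^sup>2))"
    for x by (simp add: cheb_T_def algebra_simps)
  show "interval_lebesgue_integrable lborel (-1) 1 (\<lambda>x. cheb_T i x * cheb_T i' x * (1 / sqrt (1 - x\<^sup>2)))"
    unfolding split by (rule interval_lebesgue_integral_diff(1)[OF shifted(1) weight(1)])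
  have "(LBINT x=-1..1. cheb_T i x * cheb_T i' x * (1 / sqrt (1 - x\<^sup>2))) = (G pi - G 0) - (pi - 0)"
    unfolding split interval_lebesgue_integral_diff(2)[OF shifted(1) weight(1)] shifted(2) weight(2) ..
  also have "\<dots> = pi / 2 * cheb_gram i i'"
    unfolding G_def cos_antideriv_0_pi cheb_gram_def by auto
  finally show "(LBINT x=-1..1. cheb_T i x * cheb_T i' x * (1 / sqrt (1 - x\<^sup>2))) = pi / 2 * cheb_gram i i'" .
qed

section \<open>Orthogonality of the Lissajous modes\<close>

definition cheb_expansion :: "nat \<Rightarrow> nat \<Rightarrow> (nat \<times> nat \<Rightarrow> real) \<Rightarrow> real \<times> real \<Rightarrow> real" where
  "cheb_expansion n p c = (\<lambda>(x, y). \<Sum>(i, j)\<in>GammaL n p. c (i, j) * cheb_T i x * cheb_T j y)"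

lemma PiL_eq_range: "PiL n p = range (cheb_expansion n p)"
  unfolding PiL_def cheb_expansion_def by auto

lemma cheb_expansion_diff:
  "cheb_expansion n p (\<lambda>a. c a - d a) z = cheb_expansion n p c z - cheb_expansion n p d z"
  unfolding cheb_expansion_def by (auto simp: split_def algebra_simps simp flip: sum_subtractf)

definition wave :: "nat \<Rightarrow> nat \<Rightarrow> int \<Rightarrow> int \<Rightarrow> real \<Rightarrow> real" where
  "wave n q A B t = cos (real_of_int A * (pi / 2 - real n * t)) * cos (real_of_int B * (pi / 2 - real q * t))"

definition lissajous_mode :: "nat \<Rightarrow> nat \<Rightarrow> nat \<times> nat \<Rightarrow> real \<Rightarrow> real" where
  "lissajous_mode n p a = wave n (n + p) (int (fst a)) (int (snd a))"

lemma lissajous_mode_eq_Egamma: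
  "lissajous_mode n p a = Egamma n p (\<lambda>(x, y). cheb_T (fst a) x * cheb_T (snd a) y)"
  unfolding lissajous_mode_def wave_def Egamma_def lissajous_def by (simp add: cheb_T_sin)

lemma Egamma_cheb_expansion:
  "Egamma n p (cheb_expansion n p c) = (\<lambda>t. \<Sum>a\<in>GammaL n p. c a * lissajous_mode n p a t)"
  unfolding Egamma_def cheb_expansion_def lissajous_def lissajous_mode_def wave_def
  by (auto simp: cheb_T_sin split_def intro!: sum.cong)

lemma continuous_on_wave: "continuous_on A (wave n q a b)"
  unfolding wave_def[abs_def] by (intro continuous_intros)

lemma interval_integrable_wave: "interval_lebesgue_integrable lborel 0 (2 * pi) (wave n q A B)"
  unfolding zero_ereal_def by (rule interval_integrable_continuous_on) (auto intro: continuous_on_wave)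

lemma wave_mult:
  "wave n q A B t * wave n q A' B' t =
     (wave n q (A - A') (B - B') t + wave n q (A - A') (B + B') t
      + wave n q (A + A') (B - B') t + wave n q (A + A') (B + B') t) / 4"
proof -
  define \<phi> \<psi> where "\<phi> = pi / 2 - real n * t" and "\<psi> = pi / 2 - real q * t"
  have wave_eq: "wave n q A B t = cos (real_of_int A * \<phi>) * cos (real_of_int B * \<psi>)" for A B
    unfolding wave_def \<phi>_def \<psi>_def ..
  have cc: "cos (real_of_int A * x) * cos (real_of_int A' * x) =
      (cos (real_of_int (A - A') * x) + cos (real_of_int (A + A') * x)) / 2" for A A' :: int and x
  proof -
    have "real_of_int A * x - real_of_int A' * x = real_of_int (A - A') * x"
         "real_of_int A * x + real_of_int A' * x = real_of_int (A + A') * x"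
      by (simp_all add: algebra_simps)
    then show ?thesis unfolding cos_times_cos by simp
  qed
  have "wave n q A B t * wave n q A' B' t =
      (cos (real_of_int A * \<phi>) * cos (real_of_int A' * \<phi>)) * (cos (real_of_int B * \<psi>) * cos (real_of_int B' * \<psi>))"
    unfolding wave_eq by (simp only: mult_ac)
  then show ?thesis unfolding wave_eq cc by (simp add: field_simps)
qed

lemma wave_eq_cos_sum:
  "wave n q A B t =
     cos (real_of_int (A - B) * (pi / 2) - real_of_int (A * int n - B * int q) * t) / 2 +
     cos (real_of_int (A + B) * (pi / 2) - real_of_int (A * int n + B * int q) * t) / 2"
proof -
  have "real_of_int A * (pi/2 - real n * t) - real_of_int B * (pi/2 - real q * t) =
        real_of_int (A - B) * (pi / 2) - real_of_int (A * int n - B * int q) * t"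
       "real_of_int A * (pi/2 - real n * t) + real_of_int B * (pi/2 - real q * t) =
        real_of_int (A + B) * (pi / 2) - real_of_int (A * int n + B * int q) * t"
    by (simp_all add: field_simps)
  then show ?thesis unfolding wave_def cos_times_cos by (simp add: add_divide_distrib)
qed

lemma interval_integral_cos_linear:
  fixes K :: int
  shows "(LBINT t=0..2*pi. cos (\<alpha> - real_of_int K * t)) = (if K = 0 then 2 * pi * cos \<alpha> else 0)"
proof (cases "K = 0")
  case True
  have "(LBINT t=ereal 0..ereal (2*pi). cos (\<alpha> - real_of_int K * t)) =
      (\<lambda>t. t * cos \<alpha>) (2*pi) - (\<lambda>t. t * cos \<alpha>) 0"
    by (rule interval_integral_FTC_finite)
       (auto simp: True intro!: continuous_intros derivative_eq_intros
         simp flip: has_real_derivative_iff_has_vector_derivative)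
  then show ?thesis using True by (simp add: zero_ereal_def)
next
  case False
  let ?F = "\<lambda>t. - sin (\<alpha> - real_of_int K * t) / real_of_int K"
  have "(LBINT t=ereal 0..ereal (2*pi). cos (\<alpha> - real_of_int K * t)) = ?F (2*pi) - ?F 0"
    by (rule interval_integral_FTC_finite)
       (auto simp: False intro!: continuous_intros derivative_eq_intros
         simp flip: has_real_derivative_iff_has_vector_derivative)
  moreover have "sin (\<alpha> - real_of_int K * (2*pi)) = sin \<alpha>"
    using sin_int_2pin[of K] cos_int_2pin[of K] by (simp add: sin_diff mult.commute)
  ultimately show ?thesis using False by (simp add: zero_ereal_def)
qed

definition resonance :: "nat \<Rightarrow> nat \<Rightarrow> int \<Rightarrow> int \<Rightarrow> real" where
  "resonance n q A B = (if A * int n + B * int q = 0 then cos (real_of_int (A + B) * (pi / 2)) else 0)"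

lemma interval_integral_wave:
  "(LBINT t=0..2*pi. wave n q A B t) = pi * (resonance n q A B + resonance n q A (-B))"
proof -
  have integrable: "interval_lebesgue_integrable lborel 0 (2*pi) (\<lambda>t. cos (\<alpha> - real_of_int K * t) / 2)"
    for \<alpha> and K :: int
    unfolding zero_ereal_def by (rule interval_integrable_continuous_on) (auto intro!: continuous_intros)
  show ?thesis
    unfolding wave_eq_cos_sum interval_lebesgue_integral_add(2)[OF integrable integrable]
      interval_lebesgue_integral_divide interval_integral_cos_linear resonance_def
    by (simp add: algebra_simps)
qed

lemma odd_if_GammaL_resonance:
  fixes A B :: int
  assumes n: "n > 0" and p: "p > 0" and "odd p" and "coprime n (n + p)"
    and G: "(i, j) \<in> GammaL n p" "(i', j') \<in> GammaL n p"
    and bounds: "\<bar>A\<bar> \<le> int (i + i')" "\<bar>B\<bar> \<le> int (j + j')"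
    and res: "A * int n + B * int (n + p) = 0" and nonzero: "A \<noteq> 0 \<or> B \<noteq> 0"
  shows "odd (A + B)"
proof -
  define q where "q = n + p"
  have "coprime q n" using \<open>coprime n (n + p)\<close> by (simp add: q_def coprime_commute)
  then have "coprime (int q) (int n)" by simp
  moreover have "int q dvd A * int n"
    using res by (simp add: q_def dvd_def) (metis add.commute add_eq_0_iff mult.commute mult_minus_right)
  ultimately obtain k where A: "A = int q * k" by (auto simp: coprime_dvd_mult_left_iff elim: dvdE)
  have "int q * (k * int n + B) = 0" using res by (simp add: A q_def algebra_simps)
  then have B: "B = - k * int n" using n by (simp add: q_def)
  have "odd k"
  proof
    assume "even k"
    moreover have "k \<noteq> 0" using nonzero A B by auto
    ultimately have "\<bar>k\<bar> \<ge> 2" by (auto elim!: evenE)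
    then have "int q * 2 \<le> int q * \<bar>k\<bar>" "int n * 2 \<le> int n * \<bar>k\<bar>"
      by (simp_all add: mult_left_mono)
    then have "2 * int q \<le> \<bar>A\<bar>" "2 * int n \<le> \<bar>B\<bar>"
      by (simp_all add: A B abs_mult mult.commute)
    then have "2 * q \<le> i + i'" "2 * n \<le> j + j'" using bounds by linarith+
    then have "n * (2 * q) + q * (2 * n) \<le> n * (i + i') + q * (j + j')"
      by (intro add_mono mult_left_mono) auto
    moreover have "n * i + q * j \<le> 2 * n * q" "n * i' + q * j' \<le> 2 * n * q"
      using GammaL_weighted_degree(1)[OF n p] G by (auto simp: q_def)
    ultimately have "n * i + q * j = 2 * n * q" "n * i' + q * j' = 2 * n * q"
      by (simp_all add: algebra_simps)
    then have "i = 0" "i' = 0"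
      using GammaL_weighted_degree(2)[OF n p] G by (auto simp: q_def)
    then show False using \<open>2 * q \<le> i + i'\<close> n by (simp add: q_def)
  qed
  moreover have "A + B = k * int p" by (simp add: A B q_def algebra_simps)
  ultimately show ?thesis using \<open>odd p\<close> by simp
qed

lemma resonance_GammaL:
  fixes A B :: int
  assumes "n > 0" and "p > 0" and "odd p" and "coprime n (n + p)"
    and "(i, j) \<in> GammaL n p" "(i', j') \<in> GammaL n p"
    and "\<bar>A\<bar> \<le> int (i + i')" "\<bar>B\<bar> \<le> int (j + j')"
  shows "resonance n (n + p) A B = (if A = 0 \<and> B = 0 then 1 else 0)"
proof -
  have "cos (real_of_int (A + B) * (pi / 2)) = 0" if "A \<noteq> 0 \<or> B \<noteq> 0" "A * int n + B * int (n + p) = 0"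
    using odd_if_GammaL_resonance[OF assms that(2,1)] cos_zero_iff_int by blast
  then show ?thesis unfolding resonance_def by auto
qed

definition cheb_gram2 :: "nat \<times> nat \<Rightarrow> nat \<times> nat \<Rightarrow> real" where
  "cheb_gram2 a b = cheb_gram (fst a) (fst b) * cheb_gram (snd a) (snd b)"

lemma cheb_gram2_eq_0: "a \<noteq> b \<Longrightarrow> cheb_gram2 a b = 0"
  unfolding cheb_gram2_def cheb_gram_def by (auto simp: prod_eq_iff)

lemma cheb_gram2_diag_ge_1: "cheb_gram2 a a \<ge> 1"
  unfolding cheb_gram2_def cheb_gram_def by auto

lemma lissajous_mode_orthogonality:
  assumes "n > 0" and "p > 0" and "odd p" and "coprime n (n + p)"
    and "a \<in> GammaL n p" "b \<in> GammaL n p"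
  shows "(LBINT t=0..2*pi. lissajous_mode n p a t * lissajous_mode n p b t) = pi / 2 * cheb_gram2 a b"
proof -
  obtain i j i' j' where a: "a = (i, j)" and b: "b = (i', j')" by fastforce
  let ?W = "wave n (n + p)"
  have W: "(LBINT t=0..2*pi. ?W A B t) = (if A = 0 \<and> B = 0 then 2 * pi else 0)"
    if "\<bar>A\<bar> \<le> int (i + i')" "\<bar>B\<bar> \<le> int (j + j')" for A B
    using resonance_GammaL[OF assms(1-4) assms(5,6)[unfolded a b] that]
      resonance_GammaL[OF assms(1-4) assms(5,6)[unfolded a b] that(1), of "-B"] that(2)
    by (simp add: interval_integral_wave)
  have "(LBINT t=0..2*pi. lissajous_mode n p a t * lissajous_mode n p b t) =
      ((LBINT t=0..2*pi. ?W (int i - int i') (int j - int j') t)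
       + (LBINT t=0..2*pi. ?W (int i - int i') (int j + int j') t)
       + (LBINT t=0..2*pi. ?W (int i + int i') (int j - int j') t)
       + (LBINT t=0..2*pi. ?W (int i + int i') (int j + int j') t)) / 4"
    unfolding a b lissajous_mode_def fst_conv snd_conv wave_mult
    by (simp add: interval_lebesgue_integral_add(2) interval_integrable_wave)
  also have "\<dots> = pi / 2 * cheb_gram2 a b"
    by (subst W, simp, simp)+ (auto simp: a b cheb_gram2_def cheb_gram_def)
  finally show ?thesis .
qed

lemma interval_lebesgue_integral_sum:
  fixes f :: "'a \<Rightarrow> real \<Rightarrow> 'b::{banach, second_countable_topology}"
  assumes "finite S" and "\<And>s. s \<in> S \<Longrightarrow> interval_lebesgue_integrable M l u (f s)"
  shows "interval_lebesgue_integrable M l u (\<lambda>x. \<Sum>s\<in>S. f s x)"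
    and "interval_lebesgue_integral M l u (\<lambda>x. \<Sum>s\<in>S. f s x) = (\<Sum>s\<in>S. interval_lebesgue_integral M l u (f s))"
proof -
  have "interval_lebesgue_integrable M l u (\<lambda>x. \<Sum>s\<in>S. f s x) \<and>
      interval_lebesgue_integral M l u (\<lambda>x. \<Sum>s\<in>S. f s x) = (\<Sum>s\<in>S. interval_lebesgue_integral M l u (f s))"
    using assms
  proof (induction S rule: finite_induct)
    case empty
    then show ?case
      by (simp add: interval_lebesgue_integrable_def interval_lebesgue_integral_def
          set_integrable_def set_lebesgue_integral_def)
  next
    case (insert s S)
    then show ?case using interval_lebesgue_integral_add[of M l u "f s"] by simp
  qed
  then show "interval_lebesgue_integrable M l u (\<lambda>x. \<Sum>s\<in>S. f s x)"
    and "interval_lebesgue_integral M l u (\<lambda>x. \<Sum>s\<in>S. f s x) = (\<Sum>s\<in>S. interval_lebesgue_integral M l u (f s))"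
    by auto
qed

lemma interval_lebesgue_integral_double_sum:
  fixes h :: "'a \<Rightarrow> 'a \<Rightarrow> real \<Rightarrow> 'b::{banach, second_countable_topology}"
  assumes "finite S" and "\<And>a b. a \<in> S \<Longrightarrow> b \<in> S \<Longrightarrow> interval_lebesgue_integrable M l u (h a b)"
  shows "interval_lebesgue_integral M l u (\<lambda>x. \<Sum>a\<in>S. \<Sum>b\<in>S. h a b x) =
      (\<Sum>a\<in>S. \<Sum>b\<in>S. interval_lebesgue_integral M l u (h a b))"
  using assms by (simp add: interval_lebesgue_integral_sum)

definition coeff_inner :: "nat \<Rightarrow> nat \<Rightarrow> (nat \<times> nat \<Rightarrow> real) \<Rightarrow> (nat \<times> nat \<Rightarrow> real) \<Rightarrow> real" where
  "coeff_inner n p c d = (\<Sum>a\<in>GammaL n p. \<Sum>b\<in>GammaL n p. c a * d b * cheb_gram2 a b / 4)"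

lemma trig_inner_Egamma_cheb_expansion:
  assumes "n > 0" and "p > 0" and "odd p" and "coprime n (n + p)"
  shows "trig_inner (Egamma n p (cheb_expansion n p c)) (Egamma n p (cheb_expansion n p d)) =
      coeff_inner n p c d"
proof -
  let ?G = "GammaL n p" and ?m = "lissajous_mode n p"
  have integrable: "interval_lebesgue_integrable lborel 0 (2*pi) (\<lambda>t. c a * d b * (?m a t * ?m b t))" for a b
    unfolding zero_ereal_def lissajous_mode_def
    by (rule interval_integrable_continuous_on) (auto intro!: continuous_intros continuous_on_wave)
  have "Egamma n p (cheb_expansion n p c) t * Egamma n p (cheb_expansion n p d) t =
      (\<Sum>a\<in>?G. \<Sum>b\<in>?G. c a * d b * (?m a t * ?m b t))" for t
    unfolding Egamma_cheb_expansion sum_product by (simp add: algebra_simps)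
  then have "(LBINT t=0..2*pi. Egamma n p (cheb_expansion n p c) t * Egamma n p (cheb_expansion n p d) t) =
      (\<Sum>a\<in>?G. \<Sum>b\<in>?G. c a * d b * (pi / 2 * cheb_gram2 a b))"
    by (simp add: interval_lebesgue_integral_double_sum[OF finite_GammaL integrable]
        lissajous_mode_orthogonality[OF assms])
  then show ?thesis
    unfolding trig_inner_def coeff_inner_def by (simp add: sum_distrib_left algebra_simps)
qed

lemma cheb_inner_cheb_expansion:
  "cheb_inner (cheb_expansion n p c) (cheb_expansion n p d) = coeff_inner n p c d"
proof -
  let ?G = "GammaL n p"
  let ?U = "\<lambda>a b x. cheb_T (fst a) x * cheb_T (fst b) x * (1 / sqrt (1 - x\<^sup>2))"
  let ?V = "\<lambda>a b y. cheb_T (snd a) y * cheb_T (snd b) y * (1 / sqrt (1 - y\<^sup>2))"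
  have integrable: "interval_lebesgue_integrable lborel (-1) 1 (\<lambda>x. K * ?U a b x)"
    "interval_lebesgue_integrable lborel (-1) 1 (\<lambda>y. K * ?V a b y)" for K a b
    by (intro interval_lebesgue_integrable_mult_right cheb_T_orthogonality(1))+
  have integrand: "cheb_expansion n p c (x, y) * cheb_expansion n p d (x, y) *
        (1 / (sqrt (1 - x\<^sup>2) * sqrt (1 - y\<^sup>2))) =
      (\<Sum>a\<in>?G. \<Sum>b\<in>?G. (c a * d b * ?U a b x) * ?V a b y)" for x y
  proof -
    have expand: "cheb_expansion n p e (x, y) = (\<Sum>a\<in>?G. e a * cheb_T (fst a) x * cheb_T (snd a) y)" for e
      unfolding cheb_expansion_def by (simp add: split_def)
    have product: "(\<Sum>a\<in>?G. f a) * (\<Sum>b\<in>?G. g b) * K = (\<Sum>a\<in>?G. \<Sum>b\<in>?G. f a * g b * K)"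
      for f g :: "nat \<times> nat \<Rightarrow> real" and K
      by (simp only: sum_distrib_right sum_distrib_left) (rule sum.swap)
    have "1 / (sqrt (1 - x\<^sup>2) * sqrt (1 - y\<^sup>2)) = (1 / sqrt (1 - x\<^sup>2)) * (1 / sqrt (1 - y\<^sup>2))"
      by simp
    then show ?thesis unfolding expand product by (intro sum.cong refl) (simp only: mult_ac)
  qed
  have inner: "(LBINT y=-1..1. cheb_expansion n p c (x, y) * cheb_expansion n p d (x, y) *
        (1 / (sqrt (1 - x\<^sup>2) * sqrt (1 - y\<^sup>2)))) =
      (\<Sum>a\<in>?G. \<Sum>b\<in>?G. (c a * d b * (pi / 2 * cheb_gram (snd a) (snd b))) * ?U a b x)" for x
    unfolding integrand interval_lebesgue_integral_double_sum[OF finite_GammaL integrable(2)]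
    by (intro sum.cong refl)
       (simp only: interval_lebesgue_integral_mult_right cheb_T_orthogonality(2); simp only: mult_ac)
  have "(LBINT x=-1..1. (LBINT y=-1..1. cheb_expansion n p c (x, y) * cheb_expansion n p d (x, y) *
        (1 / (sqrt (1 - x\<^sup>2) * sqrt (1 - y\<^sup>2))))) =
      (\<Sum>a\<in>?G. \<Sum>b\<in>?G. (c a * d b * (pi / 2 * cheb_gram (snd a) (snd b))) * (pi / 2 * cheb_gram (fst a) (fst b)))"
    unfolding inner interval_lebesgue_integral_double_sum[OF finite_GammaL integrable(1)]
    by (intro sum.cong refl)
       (simp only: interval_lebesgue_integral_mult_right cheb_T_orthogonality(2))
  then show ?thesis
    unfolding cheb_inner_def coeff_inner_def cheb_gram2_def
    by (simp add: sum_distrib_left power2_eq_square algebra_simps)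
qed

lemma coeff_inner_self: "coeff_inner n p c c = (\<Sum>a\<in>GammaL n p. (c a)\<^sup>2 * cheb_gram2 a a / 4)"
  unfolding coeff_inner_def
proof (intro sum.cong refl)
  fix a assume a: "a \<in> GammaL n p"
  have "(\<Sum>b\<in>GammaL n p - {a}. c a * c b * cheb_gram2 a b / 4) = 0"
    by (intro sum.neutral ballI) (auto simp: cheb_gram2_eq_0)
  then show "(\<Sum>b\<in>GammaL n p. c a * c b * cheb_gram2 a b / 4) = (c a)\<^sup>2 * cheb_gram2 a a / 4"
    by (subst sum.remove[OF finite_GammaL a]) (simp add: power2_eq_square)
qed

lemma coeff_inner_self_eq_0_imp:
  assumes "coeff_inner n p c c = 0" and "a \<in> GammaL n p"
  shows "c a = 0"
proof -
  have nonneg: "0 \<le> (c b)\<^sup>2 * cheb_gram2 b b / 4" if "b \<in> GammaL n p" for b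
    using order.trans[OF zero_le_one cheb_gram2_diag_ge_1[of b]] by simp
  have "(c a)\<^sup>2 * cheb_gram2 a a / 4 = 0"
    using assms coeff_inner_self sum_nonneg_eq_0_iff[OF finite_GammaL nonneg] by auto
  then show ?thesis using cheb_gram2_diag_ge_1[of a] by auto
qed

lemma coeffs_eq_0_if_Egamma_eq_0:
  assumes "n > 0" and "p > 0" and "odd p" and "coprime n (n + p)"
    and "Egamma n p (cheb_expansion n p c) = (\<lambda>_. 0)" and "a \<in> GammaL n p"
  shows "c a = 0"
proof (rule coeff_inner_self_eq_0_imp[OF _ assms(6)])
  show "coeff_inner n p c c = 0"
    using trig_inner_Egamma_cheb_expansion[OF assms(1-4), of c c] assms(5)
    by (simp add: trig_inner_def)
qed

lemma inj_on_Egamma: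
  assumes "n > 0" and "p > 0" and "odd p" and "coprime n (n + p)"
  shows "inj_on (Egamma n p) (PiL n p)"
proof (rule inj_onI)
  fix P Q assume "P \<in> PiL n p" "Q \<in> PiL n p" and E: "Egamma n p P = Egamma n p Q"
  then obtain c d where P: "P = cheb_expansion n p c" and Q: "Q = cheb_expansion n p d"
    unfolding PiL_eq_range by blast
  have diff: "Egamma n p (cheb_expansion n p (\<lambda>a. c a - d a)) = (\<lambda>_. 0)"
    using E unfolding P Q Egamma_def cheb_expansion_diff by (simp add: fun_eq_iff)
  have "c a = d a" if "a \<in> GammaL n p" for a
    using coeffs_eq_0_if_Egamma_eq_0[OF assms diff that] by simp
  then show "P = Q"
    unfolding P Q cheb_expansion_def by (auto simp: split_def intro!: sum.cong)
qed

definition trig_poly :: "nat \<Rightarrow> (nat \<Rightarrow> real) \<Rightarrow> (nat \<Rightarrow> real) \<Rightarrow> real \<Rightarrow> real" where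
  "trig_poly N a b = (\<lambda>t. (\<Sum>m=0..N. a m * cos (real m * t)) + (\<Sum>m=1..N-1. b m * sin (real m * t)))"

lemma mem_PiTrig_iff: "q \<in> PiTrig N \<longleftrightarrow> (\<exists>a b. q = trig_poly N a b)"
  unfolding PiTrig_def trig_poly_def by auto

lemma PiTrig_add:
  assumes "f \<in> PiTrig N" and "g \<in> PiTrig N"
  shows "(\<lambda>t. f t + g t) \<in> PiTrig N"
proof -
  obtain a b a' b' where "f = trig_poly N a b" "g = trig_poly N a' b'"
    using assms mem_PiTrig_iff by metis
  then have "(\<lambda>t. f t + g t) = trig_poly N (\<lambda>m. a m + a' m) (\<lambda>m. b m + b' m)"
    unfolding trig_poly_def by (auto simp: algebra_simps sum.distrib)
  then show ?thesis using mem_PiTrig_iff by blast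
qed

lemma PiTrig_cmult:
  assumes "f \<in> PiTrig N"
  shows "(\<lambda>t. c * f t) \<in> PiTrig N"
proof -
  obtain a b where "f = trig_poly N a b" using assms mem_PiTrig_iff by metis
  then have "(\<lambda>t. c * f t) = trig_poly N (\<lambda>m. c * a m) (\<lambda>m. c * b m)"
    unfolding trig_poly_def by (auto simp: algebra_simps sum_distrib_left)
  then show ?thesis using mem_PiTrig_iff by blast
qed

lemma PiTrig_linear_combination:
  assumes "finite S" and "\<And>s. s \<in> S \<Longrightarrow> f s \<in> PiTrig N"
  shows "(\<lambda>t. \<Sum>s\<in>S. c s * f s t) \<in> PiTrig N"
  using assms
proof (induction S rule: finite_induct)
  case empty
  have "(\<lambda>t. 0) = trig_poly N (\<lambda>m. 0) (\<lambda>m. 0)" unfolding trig_poly_def by simp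
  then show ?case using mem_PiTrig_iff by auto
next
  case (insert s S)
  then have "(\<lambda>t. c s * f s t + (\<Sum>s\<in>S. c s * f s t)) \<in> PiTrig N"
    by (intro PiTrig_add PiTrig_cmult) auto
  then show ?case using insert by simp
qed

lemma cos_phase_in_PiTrig_nat:
  assumes "m \<le> N" and "m = N \<longrightarrow> sin \<alpha> = 0"
  shows "(\<lambda>t. cos (\<alpha> - real m * t)) \<in> PiTrig N"
proof -
  let ?a = "\<lambda>l. if l = m then cos \<alpha> else 0" and ?b = "\<lambda>l. if l = m then sin \<alpha> else 0"
  have "(\<Sum>l=0..N. ?a l * cos (real l * t)) = (\<Sum>l=0..N. if l = m then cos \<alpha> * cos (real m * t) else 0)"
       "(\<Sum>l=1..N-1. ?b l * sin (real l * t)) = (\<Sum>l=1..N-1. if l = m then sin \<alpha> * sin (real m * t) else 0)"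
    for t by (intro sum.cong; simp)+
  moreover have "m \<notin> {1..N-1} \<Longrightarrow> sin \<alpha> * sin (real m * t) = 0" for t
    using assms by (cases "m = 0") auto
  ultimately have "(\<Sum>l=0..N. ?a l * cos (real l * t)) = cos \<alpha> * cos (real m * t)"
      "(\<Sum>l=1..N-1. ?b l * sin (real l * t)) = sin \<alpha> * sin (real m * t)" for t
    using assms(1) by auto
  then have "(\<lambda>t. cos (\<alpha> - real m * t)) = trig_poly N ?a ?b"
    unfolding trig_poly_def cos_diff by simp
  then show ?thesis using mem_PiTrig_iff by blast
qed

lemma cos_phase_in_PiTrig:
  fixes K :: int
  assumes "\<bar>K\<bar> \<le> int N" and "\<bar>K\<bar> = int N \<longrightarrow> sin \<alpha> = 0"
  shows "(\<lambda>t. cos (\<alpha> - real_of_int K * t)) \<in> PiTrig N"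
proof (cases "K \<ge> 0")
  case True
  then have "(\<lambda>t. cos (\<alpha> - real (nat K) * t)) \<in> PiTrig N"
    using assms by (intro cos_phase_in_PiTrig_nat) auto
  then show ?thesis using True by simp
next
  case False
  then have "(\<lambda>t. cos (- \<alpha> - real (nat (- K)) * t)) \<in> PiTrig N"
    using assms by (intro cos_phase_in_PiTrig_nat) auto
  moreover have "cos (- \<alpha> - real (nat (- K)) * t) = cos (\<alpha> - real_of_int K * t)" for t
    using False cos_minus[of "\<alpha> - real_of_int K * t"] by (simp add: algebra_simps)
  ultimately show ?thesis by simp
qed

lemma GammaL_frequencies:
  assumes n: "n > 0" and p: "p > 0" and G: "(i, j) \<in> GammaL n p"
  defines "N \<equiv> int (2 * n * (n + p))"
  shows "\<bar>int i * int n + int j * int (n + p)\<bar> \<le> N"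
    and "\<bar>int i * int n - int j * int (n + p)\<bar> \<le> N"
    and "\<bar>int i * int n + int j * int (n + p)\<bar> = N \<or> \<bar>int i * int n - int j * int (n + p)\<bar> = N
         \<Longrightarrow> i = 0 \<and> j = 2 * n"
proof -
  have deg: "int i * int n + int j * int (n + p) = int (n * i + (n + p) * j)"
    by (simp add: algebra_simps)
  note bound = GammaL_weighted_degree[OF n p G]
  have le: "int i * int n + int j * int (n + p) \<le> N"
    unfolding deg N_def using bound(1) by linarith
  have nonneg: "int i * int n \<ge> 0" "int j * int (n + p) \<ge> 0" by simp_all
  show "\<bar>int i * int n + int j * int (n + p)\<bar> \<le> N" using le nonneg by linarith
  show "\<bar>int i * int n - int j * int (n + p)\<bar> \<le> N" using le nonneg by linarith
  assume "\<bar>int i * int n + int j * int (n + p)\<bar> = N \<or> \<bar>int i * int n - int j * int (n + p)\<bar> = N"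
  moreover have "x + y = M" if "x \<ge> 0" "y \<ge> 0" "x + y \<le> M" "\<bar>x + y\<bar> = M \<or> \<bar>x - y\<bar> = M"
    for x y M :: int
    using that by arith
  ultimately have "int i * int n + int j * int (n + p) = N"
    using le nonneg by blast
  then have "n * i + (n + p) * j = 2 * n * (n + p)" unfolding deg N_def by (simp only: of_nat_eq_iff)
  then show "i = 0 \<and> j = 2 * n" by (rule bound(2))
qed

lemma lissajous_mode_in_PiTrig:
  assumes n: "n > 0" and p: "p > 0" and "a \<in> GammaL n p"
  shows "lissajous_mode n p a \<in> PiTrig (2 * n * (n + p))"
proof -
  obtain i j where a: "a = (i, j)" by fastforce
  define \<alpha> \<beta> where "\<alpha> = real_of_int (int i - int j) * (pi / 2)" and "\<beta> = real_of_int (int i + int j) * (pi / 2)"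
  define K L where "K = int i * int n - int j * int (n + p)" and "L = int i * int n + int j * int (n + p)"
  note freq = GammaL_frequencies[OF n p \<open>a \<in> GammaL n p\<close>[unfolded a], folded K_def L_def]
  have phase: "sin \<alpha> = 0" "sin \<beta> = 0" if "i = 0 \<and> j = 2 * n"
  proof -
    have "\<alpha> = pi * real_of_int (- int n)" "\<beta> = pi * real_of_int (int n)"
      using that by (simp_all add: \<alpha>_def \<beta>_def)
    then show "sin \<alpha> = 0" "sin \<beta> = 0" by (simp_all only: sin_npi_int)
  qed
  have "(\<lambda>t. cos (\<alpha> - real_of_int K * t)) \<in> PiTrig (2 * n * (n + p))"
    using freq(2) freq(3) phase(1) by (intro cos_phase_in_PiTrig) blast+
  moreover have "(\<lambda>t. cos (\<beta> - real_of_int L * t)) \<in> PiTrig (2 * n * (n + p))"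
    using freq(1) freq(3) phase(2) by (intro cos_phase_in_PiTrig) blast+
  ultimately have "(\<lambda>t. 1 / 2 * cos (\<alpha> - real_of_int K * t) + 1 / 2 * cos (\<beta> - real_of_int L * t))
      \<in> PiTrig (2 * n * (n + p))"
    by (intro PiTrig_add PiTrig_cmult)
  moreover have "lissajous_mode n p a =
      (\<lambda>t. 1 / 2 * cos (\<alpha> - real_of_int K * t) + 1 / 2 * cos (\<beta> - real_of_int L * t))"
    unfolding lissajous_mode_def a fst_conv snd_conv wave_eq_cos_sum \<alpha>_def \<beta>_def K_def L_def
    by (simp add: fun_eq_iff)
  ultimately show ?thesis by simp
qed

lemma Egamma_in_PiTrigL:
  assumes "n > 0" and "p > 0" and "P \<in> PiL n p"
  shows "Egamma n p P \<in> PiTrigL n p"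
proof -
  obtain c where P: "P = cheb_expansion n p c" using assms(3) PiL_eq_range by blast
  have "Egamma n p P \<in> PiTrig (2 * n * (n + p))"
    unfolding P Egamma_cheb_expansion
    by (intro PiTrig_linear_combination finite_GammaL lissajous_mode_in_PiTrig assms(1,2))
  then show ?thesis unfolding PiTrigL_def by (simp add: Egamma_def)
qed

section \<open>Discrete orthogonality at equispaced nodes\<close>

definition trig_node :: "nat \<Rightarrow> nat \<Rightarrow> real" where
  "trig_node N k = pi * real k / real N"

lemma sum_cis_trig_nodes:
  fixes m :: int
  assumes N: "N > 0"
  shows "(\<Sum>k<2*N. cis (real_of_int m * trig_node N k)) = (if 2 * int N dvd m then of_nat (2 * N) else 0)"
proof -
  define z where "z = cis (real_of_int m * pi / real N)"
  have zk: "z ^ k = cis (real_of_int m * trig_node N k)" for k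
    unfolding z_def Complex.DeMoivre trig_node_def by (rule arg_cong[where f=cis]) (simp add: field_simps)
  show ?thesis
  proof (cases "2 * int N dvd m")
    case True
    then obtain l where "m = 2 * int N * l" by (auto elim: dvdE)
    then have "z = cis (2 * pi * real_of_int l)" unfolding z_def using N by (simp add: field_simps)
    also have "\<dots> = 1" by (rule cis_multiple_2pi) simp
    finally show ?thesis using True by (simp flip: zk)
  next
    case False
    have "z \<noteq> 1"
    proof
      assume "z = 1"
      then have "cos (real_of_int m * pi / real N) = 1"
        unfolding z_def by (metis cis.simps(1) one_complex.simps(1))
      then obtain j :: int where "real_of_int m * pi / real N = real_of_int j * 2 * pi"
        using cos_one_2pi_int by blast
      then have "real_of_int m = real_of_int (2 * int N * j)" using N by (simp add: field_simps)
      then show False using False by (simp only: of_int_eq_iff) simp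
    qed
    moreover have "z ^ (2 * N) = cis (2 * pi * real_of_int m)"
      unfolding zk trig_node_def using N by (simp add: field_simps)
    then have "z ^ (2 * N) = 1" by (simp add: cis_multiple_2pi)
    ultimately show ?thesis using False by (simp add: sum_gp_strict flip: zk)
  qed
qed

lemma sum_cos_sin_trig_nodes:
  fixes m :: int
  assumes "N > 0"
  shows "(\<Sum>k<2*N. cos (real_of_int m * trig_node N k)) = (if 2 * int N dvd m then 2 * real N else 0)"
    and "(\<Sum>k<2*N. sin (real_of_int m * trig_node N k)) = 0"
  using arg_cong[OF sum_cis_trig_nodes[OF assms, of m], of Re]
    arg_cong[OF sum_cis_trig_nodes[OF assms, of m], of Im]
  by simp_all

definition node_resonance :: "nat \<Rightarrow> int \<Rightarrow> real" where
  "node_resonance N m = (if 2 * int N dvd m then 1 else 0)"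

lemma sum_trig_products_trig_nodes:
  fixes m l :: nat
  assumes N: "N > 0"
  defines "s \<equiv> trig_node N"
  shows "(\<Sum>k<2*N. cos (real m * s k) * cos (real l * s k)) =
      real N * (node_resonance N (int m - int l) + node_resonance N (int m + int l))"
    and "(\<Sum>k<2*N. sin (real m * s k) * cos (real l * s k)) = 0"
    and "(\<Sum>k<2*N. cos (real m * s k) * sin (real l * s k)) = 0"
    and "(\<Sum>k<2*N. sin (real m * s k) * sin (real l * s k)) =
      real N * (node_resonance N (int m - int l) - node_resonance N (int m + int l))"
proof -
  have diff: "real m * s k - real l * s k = real_of_int (int m - int l) * s k"
    and add: "real m * s k + real l * s k = real_of_int (int m + int l) * s k" for k
    by (simp_all add: algebra_simps)
  note sums = sum_cos_sin_trig_nodes[OF N, folded s_def]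
  show "(\<Sum>k<2*N. cos (real m * s k) * cos (real l * s k)) =
      real N * (node_resonance N (int m - int l) + node_resonance N (int m + int l))"
    unfolding cos_times_cos diff add sum_divide_distrib[symmetric] sum.distrib sums node_resonance_def
    by simp
  show "(\<Sum>k<2*N. sin (real m * s k) * cos (real l * s k)) = 0"
    unfolding sin_times_cos diff add sum_divide_distrib[symmetric] sum.distrib sums by simp
  show "(\<Sum>k<2*N. cos (real m * s k) * sin (real l * s k)) = 0"
    unfolding cos_times_sin diff add sum_divide_distrib[symmetric] sum_subtractf sums by simp
  show "(\<Sum>k<2*N. sin (real m * s k) * sin (real l * s k)) =
      real N * (node_resonance N (int m - int l) - node_resonance N (int m + int l))"
    unfolding sin_times_sin diff add sum_divide_distrib[symmetric] sum_subtractf sums node_resonance_def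
    by simp
qed

lemma node_resonance_diff:
  assumes "m \<le> N" and "l \<le> N"
  shows "node_resonance N (int m - int l) = (if m = l then 1 else 0)"
proof -
  have "2 * int N dvd int m - int l \<longleftrightarrow> m = l"
  proof
    assume d: "2 * int N dvd int m - int l"
    show "m = l"
    proof (rule ccontr)
      assume "m \<noteq> l"
      then have "\<bar>2 * int N\<bar> \<le> \<bar>int m - int l\<bar>" by (intro dvd_imp_le_int d) simp
      then show False using assms \<open>m \<noteq> l\<close> by linarith
    qed
  qed simp
  then show ?thesis unfolding node_resonance_def by simp
qed

lemma node_resonance_add:
  assumes "m \<le> N" and "l \<le> N" and "N > 0"
  shows "node_resonance N (int m + int l) = (if m + l = 0 \<or> m + l = 2 * N then 1 else 0)"
proof -
  have "2 * int N dvd int m + int l \<longleftrightarrow> m + l = 0 \<or> m + l = 2 * N"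
  proof
    assume "2 * int N dvd int m + int l"
    then obtain c where c: "int m + int l = 2 * int N * c" by (auto elim: dvdE)
    have "c \<ge> 0"
    proof (rule ccontr)
      assume "\<not> c \<ge> 0"
      then have "2 * int N * c < 0" using assms by (simp add: mult_pos_neg)
      then show False using c by linarith
    qed
    moreover have "c \<le> 1"
    proof (rule ccontr)
      assume "\<not> c \<le> 1"
      then have "2 * int N * c \<ge> 2 * int N * 2" using assms by (intro mult_left_mono) auto
      then show False using c assms by linarith
    qed
    ultimately have "c = 0 \<or> c = 1" by linarith
    then show "m + l = 0 \<or> m + l = 2 * N" using c by auto
  next
    assume "m + l = 0 \<or> m + l = 2 * N"
    then have "int m + int l = 2 * int N * 0 \<or> int m + int l = 2 * int N * 1" by linarith
    then show "2 * int N dvd int m + int l" by (metis dvd_triv_left)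
  qed
  then show ?thesis unfolding node_resonance_def by simp
qed

lemma sum_trig_poly_times:
  "(\<Sum>k\<in>K. trig_poly N a b (x k) * g k) =
     (\<Sum>m=0..N. a m * (\<Sum>k\<in>K. cos (real m * x k) * g k)) +
     (\<Sum>m=1..N-1. b m * (\<Sum>k\<in>K. sin (real m * x k) * g k))"
  unfolding trig_poly_def distrib_right sum.distrib sum_distrib_right sum_distrib_left
  by (simp add: mult_ac sum.swap[of _ K])

lemma sum_trig_poly_cos_trig_nodes:
  assumes N: "N > 0" and "l \<le> N"
  shows "(\<Sum>k<2*N. trig_poly N a b (trig_node N k) * cos (real l * trig_node N k)) =
      a l * real N * (if l = 0 \<or> l = N then 2 else 1)"
proof -
  have "(\<Sum>k<2*N. trig_poly N a b (trig_node N k) * cos (real l * trig_node N k)) =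
      (\<Sum>m=0..N. a m * (real N * (node_resonance N (int m - int l) + node_resonance N (int m + int l))))"
    unfolding sum_trig_poly_times sum_trig_products_trig_nodes[OF N] by simp
  also have "\<dots> = (\<Sum>m=0..N. if m = l then a l * real N * (if l = 0 \<or> l = N then 2 else 1) else 0)"
    using \<open>l \<le> N\<close> N
    by (intro sum.cong refl) (auto simp: node_resonance_diff node_resonance_add)
  finally show ?thesis using \<open>l \<le> N\<close> by simp
qed

lemma sum_trig_poly_sin_trig_nodes:
  assumes N: "N > 0" and "1 \<le> l" "l \<le> N - 1"
  shows "(\<Sum>k<2*N. trig_poly N a b (trig_node N k) * sin (real l * trig_node N k)) = b l * real N"
proof -
  have "(\<Sum>k<2*N. trig_poly N a b (trig_node N k) * sin (real l * trig_node N k)) =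
      (\<Sum>m=1..N-1. b m * (real N * (node_resonance N (int m - int l) - node_resonance N (int m + int l))))"
    unfolding sum_trig_poly_times sum_trig_products_trig_nodes[OF N] by simp
  also have "\<dots> = (\<Sum>m=1..N-1. if m = l then b l * real N else 0)"
  proof (intro sum.cong refl)
    fix m assume "m \<in> {1..N-1}"
    then have "m \<le> N" "m + l \<noteq> 0" "m + l \<noteq> 2 * N" using assms by auto
    then show "b m * (real N * (node_resonance N (int m - int l) - node_resonance N (int m + int l))) =
        (if m = l then b l * real N else 0)"
      using node_resonance_diff[OF \<open>m \<le> N\<close>, of l] node_resonance_add[OF \<open>m \<le> N\<close> _ N, of l] assms
      by auto
  qed
  finally show ?thesis using assms by simp
qed

lemma trig_poly_eq_0_if_vanishes_at_nodes:
  assumes N: "N > 0" and zero: "\<And>k. k < 2 * N \<Longrightarrow> trig_poly N a b (trig_node N k) = 0"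
  shows "trig_poly N a b = (\<lambda>_. 0)"
proof -
  have "a l = 0" if "l \<le> N" for l
    using sum_trig_poly_cos_trig_nodes[OF N that, of a b] zero N by (auto split: if_split_asm)
  moreover have "b l = 0" if "1 \<le> l" "l \<le> N - 1" for l
    using sum_trig_poly_sin_trig_nodes[OF N that, of a b] zero N by simp
  ultimately show ?thesis unfolding trig_poly_def by (auto intro!: sum.neutral ext)
qed

section \<open>Counting the Lissajous nodes\<close>

definition odd_grid :: "nat \<Rightarrow> nat \<Rightarrow> (nat \<times> nat) set" where
  "odd_grid n q = (SIGMA j:{..2*n}. {i. i \<le> 2 * q \<and> odd (i + j)})"

lemma card_odd_row: "card {i. i \<le> 2 * q \<and> odd (i + j)} = (if even j then q else q + 1)"
proof (cases "even j")
  case True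
  then have "{i. i \<le> 2 * q \<and> odd (i + j)} = (\<lambda>l. 2 * l + 1) ` {..<q}"
    by (auto elim!: oddE intro!: image_eqI)
  moreover have "inj_on (\<lambda>l::nat. 2 * l + 1) {..<q}" by (auto simp: inj_on_def)
  ultimately show ?thesis using True by (simp add: card_image)
next
  case False
  then have "{i. i \<le> 2 * q \<and> odd (i + j)} = (\<lambda>l. 2 * l) ` {..q}"
    by (auto elim!: evenE intro!: image_eqI)
  moreover have "inj_on (\<lambda>l::nat. 2 * l) {..q}" by (auto simp: inj_on_def)
  ultimately show ?thesis using False by (simp add: card_image)
qed

lemma card_odd_grid: "card (odd_grid n q) = (2 * n + 1) * q + n"
proof -
  have rows: "(\<Sum>j\<le>2*m. if even j then q else q + 1) = (2 * m + 1) * q + m" for m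
  proof (induction m)
    case (Suc m)
    have "{..2 * Suc m} = insert (2 * m + 2) (insert (2 * m + 1) {..2 * m})" by auto
    then show ?case using Suc by simp
  qed simp
  have "card (odd_grid n q) = (\<Sum>j\<le>2*n. card {i. i \<le> 2 * q \<and> odd (i + j)})"
    unfolding odd_grid_def by (rule card_SigmaI) auto
  then show ?thesis by (simp only: card_odd_row rows)
qed

lemma finite_odd_grid: "finite (odd_grid n q)"
  by (rule finite_subset[of _ "{..2*n} \<times> {..2*q}"]) (auto simp: odd_grid_def)

lemma lattice_below_line_subset:
  fixes n q :: nat
  assumes "n > 0" and "q > 0"
  shows "{(i, j). n * i + q * j < 2 * n * q} \<subseteq> {..2*q} \<times> {..2*n}"
proof
  fix x assume "x \<in> {(i, j). n * i + q * j < 2 * n * q}"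
  then obtain i j where x: "x = (i, j)" and below: "n * i + q * j < 2 * n * q" by auto
  have "n * i \<le> n * i + q * j" "q * j \<le> n * i + q * j" "2 * n * q = n * (2 * q)" "2 * n * q = q * (2 * n)"
    by simp_all
  then have "n * i < n * (2 * q)" "q * j < q * (2 * n)" using below by linarith+
  then show "x \<in> {..2*q} \<times> {..2*n}" using assms x by simp
qed

lemma lattice_points_on_line:
  fixes n q :: nat
  assumes n: "n > 0" and q: "q > 0" and "coprime n q"
  shows "{(i, j). i \<le> 2 * q \<and> j \<le> 2 * n \<and> n * i + q * j = 2 * n * q} = {(0, 2 * n), (q, n), (2 * q, 0)}"
proof (intro set_eqI iffI)
  fix x assume "x \<in> {(i, j). i \<le> 2 * q \<and> j \<le> 2 * n \<and> n * i + q * j = 2 * n * q}"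
  then obtain i j where x: "x = (i, j)" and "j \<le> 2 * n" and line: "n * i + q * j = 2 * n * q" by auto
  have "n dvd n * i + q * j" unfolding line by simp
  then have "n dvd q * j" by (simp add: dvd_add_right_iff)
  then have "n dvd j" using \<open>coprime n q\<close> by (simp add: coprime_dvd_mult_right_iff)
  then obtain c where c: "j = n * c" by (auto elim: dvdE)
  have "c \<le> 2" using \<open>j \<le> 2 * n\<close> n by (simp add: c)
  then have "c = 0 \<or> c = 1 \<or> c = 2" by auto
  moreover have "n * i = n * (2 * q - c * q)" using line c by (simp add: algebra_simps diff_mult_distrib)
  ultimately show "x \<in> {(0, 2 * n), (q, n), (2 * q, 0)}" using n c x by auto
qed (auto simp: algebra_simps)

lemma card_lattice_above_line:
  fixes n q :: nat
  assumes n: "n > 0" and q: "q > 0"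
  shows "card {(i, j). i \<le> 2 * q \<and> j \<le> 2 * n \<and> n * i + q * j > 2 * n * q} =
      card {(i, j). n * i + q * j < 2 * n * q}"
proof -
  define T where "T = {(i, j). n * i + q * j < 2 * n * q}"
  define T' where "T' = {(i, j). i \<le> 2 * q \<and> j \<le> 2 * n \<and> n * i + q * j > 2 * n * q}"
  have TR: "T \<subseteq> {..2*q} \<times> {..2*n}" unfolding T_def by (rule lattice_below_line_subset[OF n q])
  \<comment> \<open>The point reflection through \<open>(q, n)\<close> exchanges the two sides of the line.\<close>
  define \<rho> where "\<rho> = (\<lambda>(i::nat, j::nat). (2 * q - i, 2 * n - j))"
  have reflect: "n * (2 * q - i) + q * (2 * n - j) + (n * i + q * j) = 4 * n * q"
    if "i \<le> 2 * q" "j \<le> 2 * n" for i j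
  proof -
    have "n * (2 * q - i) + n * i = n * (2 * q)" "q * (2 * n - j) + q * j = q * (2 * n)"
      using that by (simp_all add: diff_mult_distrib2)
    then show ?thesis by (simp add: algebra_simps)
  qed
  have "\<rho> ` T = T'"
  proof (intro set_eqI iffI)
    fix y assume "y \<in> \<rho> ` T"
    then obtain i j where ij: "(i, j) \<in> T" "y = \<rho> (i, j)" by auto
    then have "i \<le> 2 * q" "j \<le> 2 * n" using TR by auto
    with ij reflect[OF this] show "y \<in> T'" unfolding \<rho>_def T_def T'_def by auto
  next
    fix y assume "y \<in> T'"
    then obtain i j where y: "y = (i, j)" "i \<le> 2 * q" "j \<le> 2 * n" "n * i + q * j > 2 * n * q"
      by (auto simp: T'_def)
    then have "\<rho> y \<in> T" "\<rho> (\<rho> y) = y" using reflect[of i j] unfolding \<rho>_def T_def by auto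
    then show "y \<in> \<rho> ` T" by (metis image_eqI)
  qed
  moreover have "inj_on \<rho> T"
  proof (rule inj_on_inverseI)
    show "\<rho> (\<rho> x) = x" if "x \<in> T" for x using that TR unfolding \<rho>_def by auto
  qed
  ultimately show ?thesis unfolding T_def[symmetric] T'_def[symmetric] by (metis card_image)
qed

lemma card_lattice_below_line:
  fixes n q :: nat
  assumes n: "n > 0" and q: "q > 0" and "coprime n q"
  shows "2 * card {(i, j). n * i + q * j < 2 * n * q} + 3 = (2 * q + 1) * (2 * n + 1)"
proof -
  define R where "R = {..2*q} \<times> {..2*n}"
  define T where "T = {(i, j). n * i + q * j < 2 * n * q}"
  define T' where "T' = {(i, j). i \<le> 2 * q \<and> j \<le> 2 * n \<and> n * i + q * j > 2 * n * q}"
  define L where "L = {(i, j). i \<le> 2 * q \<and> j \<le> 2 * n \<and> n * i + q * j = 2 * n * q}"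
  have TR: "T \<subseteq> R" unfolding T_def R_def by (rule lattice_below_line_subset[OF n q])
  have fin: "finite T" "finite T'" "finite L"
    using finite_subset[OF TR] by (auto intro: finite_subset[of _ R] simp: R_def T'_def L_def)
  have "R = T \<union> T' \<union> L" using TR unfolding T_def T'_def L_def R_def by auto
  moreover have "card (T \<union> T' \<union> L) = card T + card T' + card L"
    using fin by (subst card_Un_disjoint; auto simp: card_Un_disjoint T_def T'_def L_def)+
  moreover have "card T' = card T"
    unfolding T_def T'_def by (rule card_lattice_above_line[OF n q])
  moreover have "card L = 3"
    unfolding L_def lattice_points_on_line[OF assms] using n q by auto
  moreover have "card R = (2 * q + 1) * (2 * n + 1)" by (simp add: R_def)
  ultimately show ?thesis by (simp add: T_def)
qed

lemma card_odd_grid_le_card_GammaL: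
  assumes n: "n > 0" and p: "p > 0" and "coprime n (n + p)"
  shows "card (odd_grid n (n + p)) \<le> card (GammaL n p)"
proof -
  define q where "q = n + p"
  define T where "T = {(i, j). n * i + q * j < 2 * n * q}"
  have q: "q > 0" using n by (simp add: q_def)
  have "2 * card T + 3 = (2 * q + 1) * (2 * n + 1)"
    unfolding T_def by (rule card_lattice_below_line[OF n q]) (use assms in \<open>simp add: q_def\<close>)
  then have "card (odd_grid n q) = card (insert (0, 2 * n) T)"
    using finite_subset[OF lattice_below_line_subset[OF n q]]
    by (simp add: card_odd_grid T_def algebra_simps)
  also have "\<dots> \<le> card (GammaL n p)"
    by (rule card_mono[OF finite_GammaL]) (auto simp: T_def q_def mem_GammaL_iff[OF n p])
  finally show ?thesis by (simp add: q_def)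
qed

lemma cos_half_pi_multiple_fold:
  fixes z :: int
  assumes M: "M > 0"
  shows "\<exists>i. i \<le> 2 * M \<and> even (int i - z) \<and>
      cos (pi * real_of_int z / (2 * real M)) = cos (pi * real i / (2 * real M))"
proof -
  define r where "r = z mod (4 * int M)"
  have z: "z = 4 * int M * (z div (4 * int M)) + r" and r: "0 \<le> r" "r < 4 * int M"
    using M by (simp_all add: r_def)
  have "pi * real_of_int z / (2 * real M) = pi * real_of_int r / (2 * real M) + 2 * pi * real_of_int (z div (4 * int M))"
    using M by (subst z) (simp add: field_simps)
  then have cos_r: "cos (pi * real_of_int z / (2 * real M)) = cos (pi * real_of_int r / (2 * real M))"
    by (simp only: cos_add cos_int_2pin sin_int_2pin mult_1_right mult_zero_right diff_zero)
  have "even (r - z)" by (subst z) simp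
  show ?thesis
  proof (cases "r \<le> 2 * int M")
    case True
    then show ?thesis using cos_r r \<open>even (r - z)\<close> by (intro exI[of _ "nat r"]) auto
  next
    case False
    have "real (nat (4 * int M - r)) = 4 * real M - real_of_int r" using r by simp
    then have "pi * real (nat (4 * int M - r)) / (2 * real M) = 2 * pi - pi * real_of_int r / (2 * real M)"
      using M by (simp add: field_simps)
    then have "cos (pi * real_of_int z / (2 * real M)) = cos (pi * real (nat (4 * int M - r)) / (2 * real M))"
      unfolding cos_r by (simp add: cos_diff)
    moreover have "int (nat (4 * int M - r)) - z = 2 * (2 * int M - z) - (r - z)" using r by simp
    ultimately show ?thesis using False \<open>even (r - z)\<close> by (intro exI[of _ "nat (4 * int M - r)"]) auto
  qed
qed

definition grid_point :: "nat \<Rightarrow> nat \<Rightarrow> nat \<times> nat \<Rightarrow> real \<times> real" where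
  "grid_point n q = (\<lambda>(j, i). (cos (pi * real i / (2 * real q)), cos (pi * real j / (2 * real n))))"

lemma lissajous_node_in_grid:
  assumes n: "n > 0" and "odd p"
  shows "lissajous n p (tpt n p (int k)) \<in> grid_point n (n + p) ` odd_grid n (n + p)"
proof -
  define q where "q = n + p"
  have q: "q > 0" using n by (simp add: q_def)
  have "real n * tpt n p (int k) = pi / 2 - pi * real_of_int (int q - int k) / (2 * real q)"
    "real (n + p) * tpt n p (int k) = pi / 2 - pi * real_of_int (int n - int k) / (2 * real n)"
    unfolding tpt_def q_def[symmetric] using n q by (simp_all add: field_simps)
  then have sines: "sin (real n * tpt n p (int k)) = cos (pi * real_of_int (int q - int k) / (2 * real q))"
    "sin (real (n + p) * tpt n p (int k)) = cos (pi * real_of_int (int n - int k) / (2 * real n))"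
    by (simp_all add: sin_cos_eq)
  obtain i where i: "i \<le> 2 * q" "even (int i - (int q - int k))"
    "cos (pi * real_of_int (int q - int k) / (2 * real q)) = cos (pi * real i / (2 * real q))"
    using cos_half_pi_multiple_fold[OF q] by blast
  obtain j where j: "j \<le> 2 * n" "even (int j - (int n - int k))"
    "cos (pi * real_of_int (int n - int k) / (2 * real n)) = cos (pi * real j / (2 * real n))"
    using cos_half_pi_multiple_fold[OF n] by blast
  \<comment> \<open>Since \<open>q - n = p\<close> is odd, the two folded indices have opposite parity.\<close>
  have "odd (int i + int j)"
    using i(2) j(2) \<open>odd p\<close> by (simp add: q_def) (metis even_add even_diff)
  then have "(j, i) \<in> odd_grid n q" unfolding odd_grid_def using i(1) j(1) by simp
  moreover have "lissajous n p (tpt n p (int k)) = grid_point n q (j, i)"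
    unfolding lissajous_def grid_point_def using sines i(3) j(3) by (simp add: q_def)
  ultimately show ?thesis unfolding q_def by blast
qed

definition lissajous_nodes :: "nat \<Rightarrow> nat \<Rightarrow> (real \<times> real) set" where
  "lissajous_nodes n p = (\<lambda>k. lissajous n p (tpt n p (int k))) ` {..<2 * (2 * n * (n + p))}"

lemma card_lissajous_nodes_le:
  assumes "n > 0" and "p > 0" and "odd p" and "coprime n (n + p)"
  shows "card (lissajous_nodes n p) \<le> card (GammaL n p)"
proof -
  have "lissajous_nodes n p \<subseteq> grid_point n (n + p) ` odd_grid n (n + p)"
    unfolding lissajous_nodes_def using lissajous_node_in_grid[OF assms(1,3)] by auto
  then have "card (lissajous_nodes n p) \<le> card (grid_point n (n + p) ` odd_grid n (n + p))"
    by (intro card_mono finite_imageI finite_odd_grid)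
  also have "\<dots> \<le> card (odd_grid n (n + p))" by (rule card_image_le[OF finite_odd_grid])
  also have "\<dots> \<le> card (GammaL n p)" by (rule card_odd_grid_le_card_GammaL) (use assms in auto)
  finally show ?thesis .
qed

section \<open>Dimension count\<close>

text \<open>Real sequences are not an instance of \<open>real_vector\<close>, so linear algebra on them goes through
  the \<open>vector_space\<close> locale.\<close>

interpretation real_seq: vector_space "\<lambda>(c::real) (f::nat \<Rightarrow> real). (\<lambda>k. c * f k)"
  by unfold_locales (simp_all add: fun_eq_iff algebra_simps)

lemma sum_fun_apply: "(\<Sum>v\<in>S. (g v :: nat \<Rightarrow> real)) k = (\<Sum>v\<in>S. g v k)"
  by (induction S rule: infinite_finite_induct) auto

definition samples :: "nat \<Rightarrow> nat \<Rightarrow> (real \<Rightarrow> real) \<Rightarrow> nat \<Rightarrow> real" where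
  "samples n p f = (\<lambda>k. if k < 2 * (2 * n * (n + p)) then f (tpt n p (int k)) else 0)"

definition node_indicator :: "nat \<Rightarrow> nat \<Rightarrow> real \<times> real \<Rightarrow> nat \<Rightarrow> real" where
  "node_indicator n p x =
     (\<lambda>k. if k < 2 * (2 * n * (n + p)) \<and> lissajous n p (tpt n p (int k)) = x then 1 else 0)"

lemma tpt_eq_trig_node: "tpt n p (int k) = trig_node (2 * n * (n + p)) k"
proof -
  have "4 * real n * real (n + p) = 2 * real (2 * n * (n + p))" by simp
  then have "2 * pi * real_of_int (int k) / (4 * real n * real (n + p)) =
      (2 * (pi * real k)) / (2 * real (2 * n * (n + p)))"
    by simp
  then show ?thesis unfolding tpt_def trig_node_def by simp
qed

lemma samples_linear_combination:
  "samples n p (\<lambda>t. \<Sum>a\<in>S. c a * f a t) = (\<Sum>a\<in>S. (\<lambda>k. c a * samples n p (f a) k))"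
  unfolding samples_def fun_eq_iff sum_fun_apply by simp

lemma eq_if_samples_eq_PiTrig:
  assumes "n > 0"
    and "f \<in> PiTrig (2 * n * (n + p))" "g \<in> PiTrig (2 * n * (n + p))"
    and "samples n p f = samples n p g"
  shows "f = g"
proof -
  let ?N = "2 * n * (n + p)"
  have "(\<lambda>t. f t + (-1) * g t) \<in> PiTrig ?N"
    using assms(2,3) by (intro PiTrig_add PiTrig_cmult)
  then obtain a b where ab: "(\<lambda>t. f t + (-1) * g t) = trig_poly ?N a b"
    unfolding mem_PiTrig_iff by blast
  have "trig_poly ?N a b (trig_node ?N k) = 0" if "k < 2 * ?N" for k
    using fun_cong[OF assms(4), of k] fun_cong[OF ab, of "trig_node ?N k"] that
    by (simp add: samples_def tpt_eq_trig_node)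
  moreover have "?N > 0" using assms(1) by simp
  ultimately have "trig_poly ?N a b = (\<lambda>_. 0)"
    using trig_poly_eq_0_if_vanishes_at_nodes by blast
  then show "f = g" using ab by (simp add: fun_eq_iff)
qed

lemma samples_in_span_node_indicators:
  assumes "\<And>k k'. lissajous n p (tpt n p (int k)) = lissajous n p (tpt n p (int k')) \<Longrightarrow>
      f (tpt n p (int k)) = f (tpt n p (int k'))"
  shows "samples n p f \<in> real_seq.span (node_indicator n p ` lissajous_nodes n p)"
proof -
  let ?K = "{..<2 * (2 * n * (n + p))}"
  let ?x = "\<lambda>k. lissajous n p (tpt n p (int k))"
  define g where "g x = f (tpt n p (int (SOME k. k \<in> ?K \<and> ?x k = x)))" for x
  have g: "g (?x k) = f (tpt n p (int k))" if "k \<in> ?K" for k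
    unfolding g_def using someI_ex[of "\<lambda>k'. k' \<in> ?K \<and> ?x k' = ?x k"] that assms by blast
  have samples: "samples n p f = (\<Sum>x\<in>lissajous_nodes n p. (\<lambda>k. g x * node_indicator n p x k))"
  proof
    fix k
    have "(\<Sum>x\<in>lissajous_nodes n p. g x * node_indicator n p x k) =
        (\<Sum>x\<in>lissajous_nodes n p. if k \<in> ?K \<and> x = ?x k then g (?x k) else 0)"
      by (intro sum.cong refl) (auto simp: node_indicator_def)
    also have "\<dots> = samples n p f k"
      using g by (simp add: samples_def lissajous_nodes_def)
    finally show "samples n p f k = (\<Sum>x\<in>lissajous_nodes n p. (\<lambda>k. g x * node_indicator n p x k)) k"
      unfolding sum_fun_apply ..
  qed
  show ?thesis
    unfolding samples by (intro real_seq.span_sum real_seq.span_scale real_seq.span_base) auto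
qed

lemma coeffs_eq_0_if_samples_eq_0:
  assumes "n > 0" and "p > 0" and "odd p" and "coprime n (n + p)"
    and zero: "(\<Sum>a\<in>GammaL n p. (\<lambda>k. c a * samples n p (lissajous_mode n p a) k)) = 0"
    and "a \<in> GammaL n p"
  shows "c a = 0"
proof (rule coeffs_eq_0_if_Egamma_eq_0[OF assms(1-4) _ \<open>a \<in> GammaL n p\<close>])
  have E: "Egamma n p (cheb_expansion n p c) \<in> PiTrig (2 * n * (n + p))"
    using Egamma_in_PiTrigL[OF assms(1,2)] PiL_eq_range unfolding PiTrigL_def by blast
  have "(\<lambda>t. 0 * Egamma n p (cheb_expansion n p c) t) \<in> PiTrig (2 * n * (n + p))"
    by (rule PiTrig_cmult[OF E])
  moreover have "samples n p (Egamma n p (cheb_expansion n p c)) = samples n p (\<lambda>_. 0)"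
    using zero unfolding Egamma_cheb_expansion samples_linear_combination
    by (simp add: samples_def fun_eq_iff)
  ultimately show "Egamma n p (cheb_expansion n p c) = (\<lambda>_. 0)"
    using eq_if_samples_eq_PiTrig[OF assms(1) E] by simp
qed

lemma inj_on_samples_lissajous_modes:
  assumes "n > 0" and "p > 0" and "odd p" and "coprime n (n + p)"
  shows "inj_on (\<lambda>a. samples n p (lissajous_mode n p a)) (GammaL n p)"
proof (rule inj_onI, rule ccontr)
  let ?u = "\<lambda>a. samples n p (lissajous_mode n p a)"
  fix a b assume a: "a \<in> GammaL n p" and b: "b \<in> GammaL n p" and eq: "?u a = ?u b" and "a \<noteq> b"
  define c where "c x = (if x = a then 1 else if x = b then -1 else (0::real))" for x
  have "c x * ?u x k = (if x = a then ?u a k else 0) - (if x = b then ?u a k else 0)" for x k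
    using eq \<open>a \<noteq> b\<close> by (simp add: c_def)
  then have "(\<Sum>x\<in>GammaL n p. (\<lambda>k. c x * ?u x k)) = 0"
    using a b finite_GammaL by (simp add: fun_eq_iff sum_fun_apply sum_subtractf)
  then have "c a = 0" using coeffs_eq_0_if_samples_eq_0[OF assms] a by blast
  then show False by (simp add: c_def)
qed

lemma independent_samples_lissajous_modes:
  assumes "n > 0" and "p > 0" and "odd p" and "coprime n (n + p)"
  shows "real_seq.independent ((\<lambda>a. samples n p (lissajous_mode n p a)) ` GammaL n p)"
proof
  let ?u = "\<lambda>a. samples n p (lissajous_mode n p a)"
  assume "real_seq.dependent (?u ` GammaL n p)"
  then have "\<exists>w. (\<exists>v\<in>?u ` GammaL n p. w v \<noteq> 0) \<and> (\<Sum>v\<in>?u ` GammaL n p. (\<lambda>k. w v * v k)) = 0"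
    using real_seq.dependent_finite[OF finite_imageI[OF finite_GammaL]] by simp
  then obtain w where w: "\<exists>v\<in>?u ` GammaL n p. w v \<noteq> 0" "(\<Sum>v\<in>?u ` GammaL n p. (\<lambda>k. w v * v k)) = 0"
    by blast
  have "(\<Sum>v\<in>?u ` GammaL n p. (\<lambda>k. w v * v k)) = (\<Sum>a\<in>GammaL n p. (\<lambda>k. w (?u a) * ?u a k))"
    by (rule sum.reindex[OF inj_on_samples_lissajous_modes[OF assms], unfolded comp_def])
  then have "(\<Sum>a\<in>GammaL n p. (\<lambda>k. w (?u a) * ?u a k)) = 0" using w(2) by simp
  then have "w (?u a) = 0" if "a \<in> GammaL n p" for a
    using coeffs_eq_0_if_samples_eq_0[OF assms, of "\<lambda>a. w (?u a)"] that by simp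
  then show False using w(1) by auto
qed

lemma samples_PiTrigL_in_span_lissajous_modes:
  assumes "n > 0" and "p > 0" and "odd p" and "coprime n (n + p)" and "Q \<in> PiTrigL n p"
  shows "samples n p Q \<in> real_seq.span ((\<lambda>a. samples n p (lissajous_mode n p a)) ` GammaL n p)"
proof (rule ccontr)
  let ?U = "(\<lambda>a. samples n p (lissajous_mode n p a)) ` GammaL n p"
  let ?I = "node_indicator n p ` lissajous_nodes n p"
  assume Q: "samples n p Q \<notin> real_seq.span ?U"
  have "samples n p (lissajous_mode n p a) \<in> real_seq.span ?I" for a
    unfolding lissajous_mode_eq_Egamma Egamma_def by (rule samples_in_span_node_indicators) simp
  moreover have "samples n p Q \<in> real_seq.span ?I"
  proof (rule samples_in_span_node_indicators)
    show "Q (tpt n p (int k)) = Q (tpt n p (int k'))"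
      if "lissajous n p (tpt n p (int k)) = lissajous n p (tpt n p (int k'))" for k k'
      using \<open>Q \<in> PiTrigL n p\<close> that unfolding PiTrigL_def by blast
  qed
  ultimately have span: "insert (samples n p Q) ?U \<subseteq> real_seq.span ?I" by blast
  have indep: "real_seq.independent (insert (samples n p Q) ?U)"
    using real_seq.independent_insertI[OF Q independent_samples_lissajous_modes[OF assms(1-4)]] .
  have "finite ?I" by (simp add: lissajous_nodes_def)
  have "card (insert (samples n p Q) ?U) \<le> card ?I"
    using real_seq.independent_span_bound[OF \<open>finite ?I\<close> indep span] by (rule conjunct2)
  also have "\<dots> \<le> card (GammaL n p)"
    using card_image_le[of "lissajous_nodes n p" "node_indicator n p"] card_lissajous_nodes_le[OF assms(1-4)]
    by (simp add: lissajous_nodes_def)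
  also have "\<dots> = card ?U" by (rule card_image[OF inj_on_samples_lissajous_modes[OF assms(1-4)], symmetric])
  finally have "card (insert (samples n p Q) ?U) \<le> card ?U" .
  moreover have "samples n p Q \<notin> ?U" using Q real_seq.span_superset[of ?U] by blast
  then have "card (insert (samples n p Q) ?U) = Suc (card ?U)"
    by (intro card_insert_disjoint finite_imageI finite_GammaL)
  ultimately show False by simp
qed

lemma PiTrigL_subset_Egamma_image:
  assumes "n > 0" and "p > 0" and "odd p" and "coprime n (n + p)"
  shows "PiTrigL n p \<subseteq> Egamma n p ` PiL n p"
proof
  let ?u = "\<lambda>a. samples n p (lissajous_mode n p a)"
  fix Q assume Q: "Q \<in> PiTrigL n p"
  obtain w where w: "samples n p Q = (\<Sum>v\<in>?u ` GammaL n p. (\<lambda>k. w v * v k))"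
    using samples_PiTrigL_in_span_lissajous_modes[OF assms Q]
    unfolding real_seq.span_finite[OF finite_imageI[OF finite_GammaL]] by blast
  define c where "c a = w (?u a)" for a
  have "samples n p Q = (\<Sum>a\<in>GammaL n p. (\<lambda>k. c a * ?u a k))"
    unfolding w c_def by (rule sum.reindex[OF inj_on_samples_lissajous_modes[OF assms], unfolded comp_def])
  then have "samples n p Q = samples n p (Egamma n p (cheb_expansion n p c))"
    unfolding Egamma_cheb_expansion samples_linear_combination .
  moreover have "Egamma n p (cheb_expansion n p c) \<in> PiTrig (2 * n * (n + p))"
    using Egamma_in_PiTrigL[OF assms(1,2)] PiL_eq_range unfolding PiTrigL_def by blast
  moreover have "Q \<in> PiTrig (2 * n * (n + p))" using Q unfolding PiTrigL_def by blast
  ultimately have "Q = Egamma n p (cheb_expansion n p c)"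
    using eq_if_samples_eq_PiTrig[OF assms(1)] by blast
  then show "Q \<in> Egamma n p ` PiL n p" unfolding PiL_eq_range by blast
qed

theorem theorem2:
  fixes n p :: nat
  assumes "n > 0" and "p > 0" and "odd p" and "coprime n (n + p)"
  shows "(\<forall>P\<in>PiL n p. \<forall>Q\<in>PiL n p. \<forall>a b :: real.
            Egamma n p (\<lambda>z. a * P z + b * Q z) = (\<lambda>t. a * Egamma n p P t + b * Egamma n p Q t))
       \<and> bij_betw (Egamma n p) (PiL n p) (PiTrigL n p)
       \<and> (\<forall>P\<in>PiL n p. \<forall>Q\<in>PiL n p.
            trig_inner (Egamma n p P) (Egamma n p Q) = cheb_inner P Q)"
proof (intro conjI)
  show "\<forall>P\<in>PiL n p. \<forall>Q\<in>PiL n p. \<forall>a b :: real.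
      Egamma n p (\<lambda>z. a * P z + b * Q z) = (\<lambda>t. a * Egamma n p P t + b * Egamma n p Q t)"
    unfolding Egamma_def by simp
  show "bij_betw (Egamma n p) (PiL n p) (PiTrigL n p)"
  proof (rule bij_betw_imageI[OF inj_on_Egamma[OF assms]])
    show "Egamma n p ` PiL n p = PiTrigL n p"
      using Egamma_in_PiTrigL[OF assms(1,2)] PiTrigL_subset_Egamma_image[OF assms] by blast
  qed
  show "\<forall>P\<in>PiL n p. \<forall>Q\<in>PiL n p. trig_inner (Egamma n p P) (Egamma n p Q) = cheb_inner P Q"
    unfolding PiL_eq_range
    by (simp add: trig_inner_Egamma_cheb_expansion[OF assms] cheb_inner_cheb_expansion)
qed

end
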